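(* Let $R$ be an environment with a single door pixel $s$, and let $A=|R|$. Run the Depth-First Leader-Follower (DFLF) strategy defined in the context until all of $R$ is filled. Then each robot makes at most $A$ moves. Consequently, the total number of moves made by all robots is at most $A^2$.
   Context: Pixels are the unit squares of the integer grid, identified with their lower-left corners $(i,j)\in\mathbb{Z}^2$. Two pixels are neighbors if they share an edge, so $(i,j)$ has the four neighbors $(i\pm1,j)$ and $(i,j\pm1)$. The environment $R$ is a finite set of pixels that is connected under this neighbor relation. It contains a single distinguished door pixel $s\in R$. Time is discrete, $t=0,1,2,\dots$. At each time, every pixel of $R$ holds at most one robot. $p(r,t)$ denotes the pixel occupied by robot $r$ at time $t$, and $\mathrm{prev}(r,t)=p(r,t-1)$. In one time step a robot either stays where it is or moves to a neighboring pixel of $R$ that is unoccupied. Vacating rule: if a robot occupies pixel $q$ at time $t$ and a different pixel at time $t+1$, then no robot occupies $q$ at time $t+1$; so the earliest a vacated pixel can be re-entered is time $t+2$. At time $0$ exactly one robot is present, on $s$. Door rule: whenever the robot on $s$ leaves, a new robot appears on $s$ as soon as the vacating rule allows. A pixel of $R$ is a frontier pixel at time $t$ if no robot has occupied it at any time $\le t$. The DFLF strategy works as follows. - Each robot is either moving or stopped. A moving robot is either the leader or a follower. - The first robot is the leader. Each newly appearing robot becomes the successor of the robot that most recently left the door, and that robot becomes its predecessor $\mathrm{pred}(r)$. These relations never change. - At each step, the leader behaves as follows. If the leader has a neighboring frontier pixel, it moves to one of them (chosen arbitrarily). Otherwise it becomes stopped permanently and leadership passes to its successor. If the leader has no frontier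 neighbor and is on the door $s$, the algorithm halts. - A follower $r$ moves at time $t$ to the pixel $\mathrm{prev}(\mathrm{pred}(r),t)$ previously occupied by its predecessor. - A stopped robot never moves again. Makespan: the first time $t^*$ at which every pixel of $R$ is occupied. *)

theory Defs
  imports Main
begin

text \<open>Pixels are identified with their lower-left corners in Z^2.\<close>
type_synonym pixel = "int \<times> int"

definition adj :: "pixel \<Rightarrow> pixel \<Rightarrow> bool" where
  "adj p q \<longleftrightarrow> \<bar>fst p - fst q\<bar> + \<bar>snd p - snd q\<bar> = 1"

definition environment :: "pixel set \<Rightarrow> pixel \<Rightarrow> bool" where
  "environment R s \<longleftrightarrow> finite R \<and> s \<in> R \<and>
     (\<forall>p\<in>R. \<forall>q\<in>R. (\<lambda>a b. a \<in> R \<and> b \<in> R \<and> adj a b)\<^sup>*\<^sup>* p q)"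

text \<open>Robots are indexed 0,1,2,...
  in order of appearance at the door; hence pred(r) = r - 1.
  pos: positions at time t; prv: positions at time t-1;
  cnt: number of robots that have appeared; ldr: index of the current leader
  (robots below ldr are stopped, robots above it are followers);
  vis: pixels occupied at some time \<le> t; halted: the algorithm halted.\<close>
record cfg =
  pos :: "nat \<Rightarrow> pixel option"
  prv :: "nat \<Rightarrow> pixel option"
  cnt :: nat
  ldr :: nat
  vis :: "pixel set"
  halted :: bool

definition dflf_init :: "pixel \<Rightarrow> cfg" where
  "dflf_init s = \<lparr>pos = (\<lambda>r. if r = 0 then Some s else None), prv = (\<lambda>_. None),
     cnt = 1, ldr = 0, vis = {s}, halted = False\<rparr>"

definition frontier_nbrs :: "pixel set \<Rightarrow> cfg \<Rightarrow> pixel \<Rightarrow> pixel set" where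
  "frontier_nbrs R c q = {q' \<in> R. adj q q' \<and> q' \<notin> vis c}"

text \<open>One time step in which the leader moves to tgt (Some q') or stops (None).
  Followers r move to the pixel their predecessor occupied at the previous time;
  stopped robots stay; a new robot appears on the door one step after the door was vacated.\<close>
definition dflf_move :: "pixel \<Rightarrow> cfg \<Rightarrow> pixel option \<Rightarrow> cfg" where
  "dflf_move s c tgt =
    (let L = ldr c;
         P' = (\<lambda>r. if r = L then (case tgt of Some q \<Rightarrow> Some q | None \<Rightarrow> pos c r)
                   else if L < r \<and> r < cnt c then prv c (r - 1)
                   else pos c r);
         newr = (0 < cnt c \<and> prv c (cnt c - 1) = Some s \<and> pos c (cnt c - 1) \<noteq> Some s);
         P'' = (if newr then P'(cnt c := Some s) else P')
     in \<lparr>pos = P'', prv = pos c, cnt = (if newr then Suc (cnt c) else cnt c),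
         ldr = (if tgt = None then Suc L else L),
         vis = vis c \<union> {q. \<exists>r. P'' r = Some q}, halted = False\<rparr>)"

definition dflf_step :: "pixel set \<Rightarrow> pixel \<Rightarrow> cfg \<Rightarrow> cfg \<Rightarrow> bool" where
  "dflf_step R s c c' \<longleftrightarrow>
    (if halted c then c' = c\<lparr>prv := pos c\<rparr>
     else (let F = (case pos c (ldr c) of Some q \<Rightarrow> frontier_nbrs R c q | None \<Rightarrow> {}) in
       if F \<noteq> {} then (\<exists>q'\<in>F. c' = dflf_move s c (Some q'))
       else if pos c (ldr c) = Some s then c' = c\<lparr>prv := pos c, halted := True\<rparr>
       else c' = dflf_move s c None))"

definition dflf_run :: "pixel set \<Rightarrow> pixel \<Rightarrow> (nat \<Rightarrow> cfg) \<Rightarrow> bool" where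
  "dflf_run R s c \<longleftrightarrow> c 0 = dflf_init s \<and> (\<forall>t. dflf_step R s (c t) (c (Suc t)))"

definition filled :: "pixel set \<Rightarrow> cfg \<Rightarrow> bool" where
  "filled R c \<longleftrightarrow> (\<forall>q\<in>R. \<exists>r. pos c r = Some q)"

definition moves :: "(nat \<Rightarrow> cfg) \<Rightarrow> nat \<Rightarrow> nat \<Rightarrow> nat" where
  "moves c r T = card {t. t < T \<and> pos (c t) r \<noteq> None \<and> pos (c (Suc t)) r \<noteq> None
                            \<and> pos (c t) r \<noteq> pos (c (Suc t)) r}"

end

theory Submission imports Defs begin

(* A new robot appears on the door only after its predecessor has left it, a follower occupies
   the pixel its predecessor occupied two steps earlier, and a leader only enters pixels nobody
   has visited.  By induction over time this yields the invariant visits_in_order: if robots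
   i < j ever occupy the same pixel, every visit of i precedes every visit of j.  Consequently no
   two robots share a pixel, so there are at most |R| robots, and no robot returns to a pixel it
   has left (a follower would otherwise be on that pixel before its predecessor).  Each robot thus
   makes at most |R| moves, and all of them together at most |R|^2. *)

lemma nat_strong_induct_Suc [case_names 0 Suc]:
  assumes "P 0" and "\<And>t. (\<And>u. u \<le> t \<Longrightarrow> P u) \<Longrightarrow> P (Suc t)"
  shows "P n"
proof (induction n rule: less_induct)
  case (less n)
  then show ?case using assms by (cases n) (auto simp: less_Suc_eq_le)
qed

lemma dflf_move_simps:
  fixes s :: pixel and c :: cfg
  defines "arrival \<equiv> 0 < cnt c \<and> prv c (cnt c - 1) = Some s \<and> pos c (cnt c - 1) \<noteq> Some s"
  shows "pos (dflf_move s c tgt) r =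
      (if arrival \<and> r = cnt c then Some s
       else if r = ldr c then (case tgt of Some q \<Rightarrow> Some q | None \<Rightarrow> pos c r)
       else if ldr c < r \<and> r < cnt c then prv c (r - 1) else pos c r)"
    and "cnt (dflf_move s c tgt) = (if arrival then Suc (cnt c) else cnt c)"
    and "ldr (dflf_move s c tgt) = (if tgt = None then Suc (ldr c) else ldr c)"
    and "vis (dflf_move s c tgt) = vis c \<union> {q. \<exists>r. pos (dflf_move s c tgt) r = Some q}"
  unfolding arrival_def by (auto simp: dflf_move_def Let_def split: option.split)

definition visits_in_order :: "(nat \<Rightarrow> cfg) \<Rightarrow> nat \<Rightarrow> bool" where
  "visits_in_order c t \<longleftrightarrow> (\<forall>i j t1 t2 q. i < j \<longrightarrow> t1 \<le> t \<longrightarrow> t2 \<le> t \<longrightarrow>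
     pos (c t1) i = Some q \<longrightarrow> pos (c t2) j = Some q \<longrightarrow> t1 < t2)"

lemma visits_in_orderD:
  "visits_in_order c t \<Longrightarrow> i < j \<Longrightarrow> t1 \<le> t \<Longrightarrow> t2 \<le> t \<Longrightarrow>
     pos (c t1) i = Some q \<Longrightarrow> pos (c t2) j = Some q \<Longrightarrow> t1 < t2"
  unfolding visits_in_order_def by blast

locale dflf_execution =
  fixes R :: "pixel set" and s :: pixel and c :: "nat \<Rightarrow> cfg"
  assumes run: "dflf_run R s c"
begin

lemma init:
  "pos (c 0) = (\<lambda>r. if r = 0 then Some s else None)" "prv (c 0) = (\<lambda>_. None)"
  "cnt (c 0) = 1" "ldr (c 0) = 0"
  "vis (c 0) = {s}" "\<not> halted (c 0)"
  using run by (simp_all add: dflf_run_def dflf_init_def)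

lemma follower_time_pos: "ldr (c t) < r \<Longrightarrow> r < cnt (c t) \<Longrightarrow> 0 < t"
  by (cases t) (auto simp: init)

lemma step: "dflf_step R s (c t) (c (Suc t))"
  using run by (simp add: dflf_run_def)

lemma prv_Suc: "prv (c (Suc t)) = pos (c t)"
  using step[of t] unfolding dflf_step_def
  by (auto simp: Let_def dflf_move_def split: if_splits option.splits)

lemma halted_Suc:
  assumes "halted (c (Suc t))"
  shows "pos (c (Suc t)) = pos (c t)" "cnt (c (Suc t)) = cnt (c t)" "vis (c (Suc t)) = vis (c t)"
proof -
  have "c (Suc t) = (c t)\<lparr>prv := pos (c t), halted := True\<rparr>"
    using step[of t] assms unfolding dflf_step_def
    by (auto simp: Let_def dflf_move_def split: if_splits option.splits)
  then show "pos (c (Suc t)) = pos (c t)" "cnt (c (Suc t)) = cnt (c t)" "vis (c (Suc t)) = vis (c t)"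
    by simp_all
qed

lemma not_halted_Suc_dflf_move:
  assumes "\<not> halted (c (Suc t))"
  obtains tgt where "c (Suc t) = dflf_move s (c t) tgt"
    "\<And>q. tgt = Some q \<Longrightarrow> q \<in> R \<and> q \<notin> vis (c t)"
    "tgt \<noteq> None \<Longrightarrow> pos (c t) (ldr (c t)) \<noteq> None"
  using assms step[of t] unfolding dflf_step_def
  by (cases "halted (c t)") (auto simp: Let_def frontier_nbrs_def split: if_splits option.splits)

lemma not_halted_SucD: "\<not> halted (c (Suc t)) \<Longrightarrow> \<not> halted (c t)"
  using step[of t] unfolding dflf_step_def by auto

lemma not_halted_mono: "u \<le> t \<Longrightarrow> \<not> halted (c t) \<Longrightarrow> \<not> halted (c u)"
proof (induction t rule: dec_induct)
  case (step t)
  then show ?case using not_halted_SucD by blast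
qed

lemma cnt_Suc: "cnt (c t) \<le> cnt (c (Suc t)) \<and> cnt (c (Suc t)) \<le> Suc (cnt (c t))"
  using step[of t] unfolding dflf_step_def
  by (auto simp: Let_def dflf_move_def split: if_splits option.splits)

lemma mono_cnt_ldr_vis:
  assumes "u \<le> t"
  shows "cnt (c u) \<le> cnt (c t)" "ldr (c u) \<le> ldr (c t)" "vis (c u) \<subseteq> vis (c t)"
proof -
  have "cnt (c t) \<le> cnt (c (Suc t)) \<and> ldr (c t) \<le> ldr (c (Suc t)) \<and>
      vis (c t) \<subseteq> vis (c (Suc t))" for t
    using step[of t] unfolding dflf_step_def
    by (auto simp: Let_def dflf_move_def split: if_splits option.splits)
  then show "cnt (c u) \<le> cnt (c t)" "ldr (c u) \<le> ldr (c t)" "vis (c u) \<subseteq> vis (c t)"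
    using lift_Suc_mono_le[of "\<lambda>t. cnt (c t)", OF _ assms]
      lift_Suc_mono_le[of "\<lambda>t. ldr (c t)", OF _ assms]
      lift_Suc_mono_le[of "\<lambda>t. vis (c t)", OF _ assms] by blast+
qed

lemma step_cases:
  assumes "\<not> halted (c (Suc t))"
  obtains (enter) t' where "r = cnt (c t)" "cnt (c (Suc t)) = Suc r"
      "pos (c (Suc t)) r = Some s" "t = Suc t'" "pos (c t') (r - 1) = Some s" "pos (c t) (r - 1) \<noteq> Some s"
    | (lead) q where "r = ldr (c t)" "pos (c t) r \<noteq> None" "pos (c (Suc t)) r = Some q"
      "q \<in> R" "q \<notin> vis (c t)"
    | (stay) "pos (c (Suc t)) r = pos (c t) r" "r < ldr (c (Suc t)) \<or> cnt (c (Suc t)) \<le> r"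
      "r < cnt (c (Suc t)) \<longleftrightarrow> r < cnt (c t)"
    | (follow) t' where "ldr (c t) < r" "r < cnt (c t)" "t = Suc t'" "pos (c (Suc t)) r = pos (c t') (r - 1)"
proof -
  obtain tgt where move: "c (Suc t) = dflf_move s (c t) tgt"
    and tgt: "\<And>q. tgt = Some q \<Longrightarrow> q \<in> R \<and> q \<notin> vis (c t)"
    and leader: "tgt \<noteq> None \<Longrightarrow> pos (c t) (ldr (c t)) \<noteq> None"
    using not_halted_Suc_dflf_move[OF assms] by metis
  define n where "n = cnt (c t)"
  define L where "L = ldr (c t)"
  define arrival where "arrival \<longleftrightarrow> 0 < n \<and> prv (c t) (n - 1) = Some s \<and> pos (c t) (n - 1) \<noteq> Some s"
  note move_simps = dflf_move_simps[of s "c t" tgt, folded move n_def L_def, folded arrival_def]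
  have cnt_stay: "\<not> (arrival \<and> r = n) \<Longrightarrow> r < cnt (c (Suc t)) \<longleftrightarrow> r < n"
    using move_simps(2) by auto
  consider "arrival \<and> r = n" | "\<not> (arrival \<and> r = n)" "r = L"
    | "\<not> (arrival \<and> r = n)" "r \<noteq> L" "L < r \<and> r < n"
    | "\<not> (arrival \<and> r = n)" "r \<noteq> L" "\<not> (L < r \<and> r < n)"
    by blast
  then show thesis
  proof cases
    case 1
    then have "t \<noteq> 0" using init(2) unfolding arrival_def by (metis option.distinct(1))
    then obtain t' where "t = Suc t'" using not0_implies_Suc by blast
    then show thesis using 1 enter move_simps(1,2) prv_Suc[of t'] unfolding arrival_def n_def by auto
  next
    case 2
    then show thesis
      using lead[of "the tgt"] stay move_simps(1,3) cnt_stay tgt[of "the tgt"] leader unfolding L_def n_def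
      by (cases tgt) auto
  next
    case 3
    then have "t \<noteq> 0" using follower_time_pos unfolding L_def n_def by blast
    then obtain t' where "t = Suc t'" using not0_implies_Suc by blast
    then show thesis using 3 follow move_simps(1) prv_Suc[of t'] unfolding L_def n_def by auto
  next
    case 4
    then have "r < ldr (c (Suc t)) \<or> cnt (c (Suc t)) \<le> r" using move_simps(2,3) by auto
    then show thesis using 4 stay move_simps(1) cnt_stay unfolding n_def by auto
  qed
qed

lemma pos_eq_None_iff: "pos (c t) r = None \<longleftrightarrow> cnt (c t) \<le> r"
proof (induction t arbitrary: r rule: nat_strong_induct_Suc)
  case 0
  then show ?case by (simp add: init)
next
  case (Suc t)
  show ?case
  proof (cases "halted (c (Suc t))")
    case True
    then show ?thesis using halted_Suc Suc.IH[of t] by simp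
  next
    case False
    then show ?thesis
    proof (cases rule: step_cases[of t r])
      case (lead q)
      then show ?thesis using Suc.IH[of t r] cnt_Suc[of t] by auto
    next
      case stay
      then show ?thesis using Suc.IH[of t r] by auto
    next
      case (follow t')
      then show ?thesis using Suc.IH[of t' "r - 1"] cnt_Suc[of t'] cnt_Suc[of t] by auto
    qed simp
  qed
qed

lemma pos_in_vis: "pos (c t) r = Some q \<Longrightarrow> q \<in> vis (c t)"
proof (induction t)
  case 0
  then show ?case by (simp add: init split: if_splits)
next
  case (Suc t)
  show ?case
  proof (cases "halted (c (Suc t))")
    case True
    then show ?thesis using halted_Suc Suc by simp
  next
    case False
    then obtain tgt where "c (Suc t) = dflf_move s (c t) tgt"
      using not_halted_Suc_dflf_move by metis
    then show ?thesis using Suc.prems dflf_move_simps(4) by auto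
  qed
qed

lemma door_visited: "s \<in> vis (c t)"
  using mono_cnt_ldr_vis(3)[of 0 t] init by auto

lemma pos_in_R:
  assumes "s \<in> R"
  shows "pos (c t) r = Some q \<Longrightarrow> q \<in> R"
proof (induction t arbitrary: r q rule: nat_strong_induct_Suc)
  case 0
  then show ?case using assms by (simp add: init split: if_splits)
next
  case (Suc t)
  show ?case
  proof (cases "halted (c (Suc t))")
    case True
    then show ?thesis using halted_Suc(1)[of t] Suc.IH[of t] Suc.prems by simp
  next
    case False
    then show ?thesis
    proof (cases rule: step_cases[of t r])
      case stay
      then show ?thesis using Suc.IH[of t r q] Suc.prems by simp
    next
      case (follow t')
      then show ?thesis using Suc.IH[of t' "r - 1" q] Suc.prems by simp
    qed (use assms Suc.prems in simp_all)
  qed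
qed

lemma follower_trails:
  assumes "\<not> halted (c t)" "ldr (c t) < j" "j < cnt (c t)"
  obtains t0 where "t = Suc (Suc t0)" "pos (c t) j = pos (c t0) (j - 1)"
proof -
  obtain t1 where t: "t = Suc t1"
    using follower_time_pos[OF assms(2,3)] not0_implies_Suc by blast
  have "ldr (c t1) \<le> ldr (c t)"
    using mono_cnt_ldr_vis(2) t by simp
  from assms(1) show thesis
    unfolding t
  proof (cases rule: step_cases[of t1 j])
    case (enter t0)
    then show thesis using that t by simp
  next
    case (follow t0)
    then show thesis using that t by simp
  qed (use assms(2,3) t \<open>ldr (c t1) \<le> ldr (c t)\<close> in auto)
qed

(* Hence a follower never moves onto a pixel its predecessor still occupies. *)
lemma active_robot_moved:
  "\<not> halted (c t) \<Longrightarrow> ldr (c t) \<le> r \<Longrightarrow> r < cnt (c t) \<Longrightarrow> prv (c t) r \<noteq> pos (c t) r"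
proof (induction t arbitrary: r rule: nat_strong_induct_Suc)
  case 0
  then show ?case by (simp add: init)
next
  case (Suc t)
  have "pos (c t) r \<noteq> pos (c (Suc t)) r"
    using Suc.prems(1)
  proof (cases rule: step_cases[of t r])
    case enter
    then show ?thesis using pos_eq_None_iff[of t r] by simp
  next
    case (lead q)
    then show ?thesis using pos_in_vis[of t r] by auto
  next
    case stay
    then show ?thesis using Suc.prems by auto
  next
    case (follow t')
    obtain t0 where t0: "t = Suc (Suc t0)" "pos (c t) r = pos (c t0) (r - 1)"
      using follower_trails[OF not_halted_SucD[OF Suc.prems(1)] follow(1,2)] .
    have "ldr (c (Suc t0)) \<le> r - 1" "r - 1 < cnt (c (Suc t0))"
      using mono_cnt_ldr_vis(2)[of "Suc t0" t] cnt_Suc[of "Suc t0"] follow(1,2) t0(1) by auto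
    moreover have "\<not> halted (c (Suc t0))"
      using not_halted_mono[OF _ Suc.prems(1)] t0(1) by simp
    ultimately have "prv (c (Suc t0)) (r - 1) \<noteq> pos (c (Suc t0)) (r - 1)"
      using Suc.IH t0(1) by simp
    then show ?thesis using follow t0 prv_Suc[of t0] by simp
  qed
  then show ?case by (simp add: prv_Suc)
qed

lemma fresh_pixel_imp_leader:
  assumes "\<not> halted (c (Suc t))" "pos (c (Suc t)) r = Some q" "q \<notin> vis (c t)"
  shows "r = ldr (c t)"
  using assms(1)
proof (cases rule: step_cases[of t r])
  case enter
  then show ?thesis using assms(2,3) door_visited by simp
next
  case stay
  then show ?thesis using assms(2,3) pos_in_vis by simp
next
  case (follow t')
  then show ?thesis using assms(2,3) pos_in_vis[of t' "r - 1" q] mono_cnt_ldr_vis(3)[of t' t] by auto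
qed

lemma no_higher_robot_before:
  assumes nh: "\<not> halted (c (Suc t))" and ord: "visits_in_order c t"
    and "i < j" "pos (c (Suc t)) i = Some q" "u \<le> t" "pos (c u) j = Some q"
  shows False
  using nh
proof (cases rule: step_cases[of t i])
  case enter
  then show False
    using assms(3-6) pos_eq_None_iff[of u j] mono_cnt_ldr_vis(1)[of u t] by simp
next
  case (lead q')
  then show False
    using assms(4-6) pos_in_vis[of u j q] mono_cnt_ldr_vis(3)[of u t] by auto
next
  case stay
  then show False using visits_in_orderD[OF ord \<open>i < j\<close>, of t u q] assms(4-6) by simp
next
  case (follow t')
  have i_at_t': "pos (c t') (i - 1) = Some q"
    using follow(4) assms(4) by simp
  have "t' < u"
    using visits_in_orderD[OF ord _ _ \<open>u \<le> t\<close> i_at_t' assms(6)] follow(3) \<open>i < j\<close> by simp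
  then have "u = t" using follow(3) \<open>u \<le> t\<close> by simp
  have "ldr (c t) < j"
    using follow(1) \<open>i < j\<close> by simp
  moreover have "j < cnt (c t)"
    using assms(6) pos_eq_None_iff[of t j] \<open>u = t\<close> by (metis not_le option.distinct(1))
  ultimately obtain t0 where t0: "t = Suc (Suc t0)" "pos (c t) j = pos (c t0) (j - 1)"
    using follower_trails[OF not_halted_SucD[OF nh]] by blast
  have "t' = Suc t0" using follow(3) t0(1) by simp
  have j_at_t0: "pos (c t0) (j - 1) = Some q"
    using t0(2) assms(6) \<open>u = t\<close> by simp
  have "t' < t0"
    by (rule visits_in_orderD[OF ord _ _ _ i_at_t' j_at_t0])
      (use follow(1,3) t0(1) \<open>i < j\<close> in simp_all)
  then show False using \<open>t' = Suc t0\<close> by simp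
qed

lemma entering_robot_alone:
  assumes nh: "\<not> halted (c (Suc t))" and ord: "visits_in_order c t"
    and "i < j" "pos (c (Suc t)) i = Some s" "j = cnt (c t)"
    and "t = Suc t'" "pos (c t') (j - 1) = Some s" "pos (c t) (j - 1) \<noteq> Some s"
  shows False
proof (cases "i < j - 1")
  case True
  then show False
    using no_higher_robot_before[OF nh ord True assms(4) _ assms(7)] assms(6) by simp
next
  case False
  then have "i = j - 1" using \<open>i < j\<close> by simp
  from nh show False
  proof (cases rule: step_cases[of t i])
    case enter
    then show False using \<open>i < j\<close> assms(5) by simp
  next
    case (lead q)
    then show False using assms(4) door_visited by simp
  next
    case stay
    then show False using assms(4,8) \<open>i = j - 1\<close> by simp
  next
    case (follow t'')
    have pred_at: "pos (c t') (i - 1) = Some s" and at: "pos (c t') i = Some s"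
      using follow(3,4) assms(4,6,7) \<open>i = j - 1\<close> by simp_all
    have "t' < t'"
      by (rule visits_in_orderD[OF ord _ _ _ pred_at at]) (use follow(1) assms(6) in simp_all)
    then show False by simp
  qed
qed

lemma moving_follower_alone:
  assumes nh: "\<not> halted (c (Suc t))" and ord: "visits_in_order c t"
    and "i < j" "pos (c (Suc t)) i = Some q" "ldr (c t) < j" "j < cnt (c t)"
    and "t = Suc t'" "pos (c t') (j - 1) = Some q"
  shows False
  using nh
proof (cases rule: step_cases[of t i])
  case enter
  then show False using assms(3,6) by linarith
next
  case (lead q')
  then show False
    using assms(4,7,8) pos_in_vis[of t' "j - 1" q] mono_cnt_ldr_vis(3)[of t' t] by auto
next
  case stay
  show False
  proof (cases "i < j - 1")
    case True
    have "t < t'"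
      by (rule visits_in_orderD[OF ord True _ _ _ assms(8)]) (use stay assms(4,7) in simp_all)
    then show False using assms(7) by simp
  next
    case False
    then have "i = j - 1" using \<open>i < j\<close> by simp
    have "prv (c t) (j - 1) \<noteq> pos (c t) (j - 1)"
      using active_robot_moved[OF not_halted_SucD[OF nh]] assms(5,6) by simp
    then show False using stay assms(4,7,8) prv_Suc[of t'] \<open>i = j - 1\<close> by simp
  qed
next
  case (follow t'')
  have pred_at: "pos (c t') (i - 1) = Some q"
    using follow(3,4) assms(4,7) by simp
  have "t' < t'"
    by (rule visits_in_orderD[OF ord _ _ _ pred_at assms(8)]) (use follow(1) assms(3,7) in simp_all)
  then show False by simp
qed

lemma robots_apart_Suc:
  assumes nh: "\<not> halted (c (Suc t))" and ord: "visits_in_order c t"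
    and "i < j" "pos (c (Suc t)) i = Some q" "pos (c (Suc t)) j = Some q"
  shows False
  using nh
proof (cases rule: step_cases[of t j])
  case (enter t')
  then have "q = s" using assms(5) by simp
  show False
    by (rule entering_robot_alone[OF nh ord assms(3) _ enter(1,4-6)]) (use assms(4) \<open>q = s\<close> in simp)
next
  case (lead q')
  then show False using fresh_pixel_imp_leader[OF nh assms(4)] assms(3,5) by simp
next
  case stay
  then show False using no_higher_robot_before[OF nh ord assms(3,4) order.refl] assms(5) by simp
next
  case (follow t')
  then show False using moving_follower_alone[OF nh ord assms(3,4)] assms(5) by simp
qed

lemma visits_in_order_Suc:
  assumes nh: "\<not> halted (c (Suc t))" and ord: "visits_in_order c t"
  shows "visits_in_order c (Suc t)"
  unfolding visits_in_order_def
proof (intro allI impI)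
  fix i j t1 t2 q
  assume "i < j" "t1 \<le> Suc t" "t2 \<le> Suc t" and at: "pos (c t1) i = Some q" "pos (c t2) j = Some q"
  then consider "t1 \<le> t" "t2 \<le> t" | "t1 \<le> t" "t2 = Suc t" | "t1 = Suc t" "t2 \<le> t" | "t1 = Suc t" "t2 = Suc t"
    by linarith
  then show "t1 < t2"
  proof cases
    case 1
    then show ?thesis using visits_in_orderD[OF ord \<open>i < j\<close> _ _ at] by simp
  next
    case 3
    then show ?thesis using no_higher_robot_before[OF nh ord \<open>i < j\<close> _ _ at(2)] at(1) by simp
  next
    case 4
    then show ?thesis using robots_apart_Suc[OF nh ord \<open>i < j\<close>] at by simp
  qed simp
qed

lemma visits_in_order: "\<not> halted (c t) \<Longrightarrow> visits_in_order c t"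
proof (induction t)
  case 0
  then show ?case by (auto simp: visits_in_order_def init split: if_splits)
next
  case (Suc t)
  then show ?case using visits_in_order_Suc not_halted_SucD by blast
qed

lemma robots_apart: "i < j \<Longrightarrow> pos (c t) i = Some q \<Longrightarrow> pos (c t) j \<noteq> Some q"
proof (induction t)
  case 0
  then show ?case using visits_in_orderD[OF visits_in_order[OF init(6)]] by blast
next
  case (Suc t)
  show ?case
  proof (cases "halted (c (Suc t))")
    case True
    then show ?thesis using Suc halted_Suc(1) by simp
  next
    case False
    then show ?thesis
      using visits_in_orderD[OF visits_in_order[OF False] Suc.prems(1) order.refl order.refl Suc.prems(2)]
      by blast
  qed
qed

lemma no_revisit:
  assumes nh: "\<not> halted (c (Suc t))" and moved: "pos (c (Suc t)) r \<noteq> pos (c t) r"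
    and at: "pos (c (Suc t)) r = Some q" and "u \<le> t"
  shows "pos (c u) r \<noteq> Some q"
proof
  assume before: "pos (c u) r = Some q"
  from nh show False
  proof (cases rule: step_cases[of t r])
    case enter
    then show False using before pos_eq_None_iff[of u r] mono_cnt_ldr_vis(1)[OF \<open>u \<le> t\<close>] by simp
  next
    case (lead q')
    then show False using at before pos_in_vis[of u r q] mono_cnt_ldr_vis(3)[OF \<open>u \<le> t\<close>] by auto
  next
    case stay
    then show False using moved by simp
  next
    case (follow t')
    have pred_at: "pos (c t') (r - 1) = Some q" using follow(4) at by simp
    have "t' < u"
      by (rule visits_in_orderD[OF visits_in_order[OF not_halted_SucD[OF nh]] _ _ \<open>u \<le> t\<close> pred_at before])
        (use follow(1,3) in simp_all)
    then show False using follow(3) \<open>u \<le> t\<close> moved at before by (simp add: le_Suc_eq)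
  qed
qed

lemma cnt_le_card:
  assumes "finite R" "s \<in> R"
  shows "cnt (c t) \<le> card R"
proof -
  let ?at = "\<lambda>r. the (pos (c t) r)"
  have at: "pos (c t) r = Some (?at r)" if "r < cnt (c t)" for r
    using pos_eq_None_iff[of t r] that by auto
  have "inj_on ?at {..<cnt (c t)}"
    by (rule linorder_inj_onI') (metis at robots_apart lessThan_iff)
  moreover have "?at ` {..<cnt (c t)} \<subseteq> R"
    using at pos_in_R[OF assms(2)] by (metis image_subsetI lessThan_iff)
  ultimately show ?thesis
    using card_inj_on_le[OF _ _ assms(1)] by fastforce
qed

lemma moves_le_card:
  assumes "finite R" "s \<in> R"
  shows "moves c r T \<le> card R"
proof -
  define S where "S = {t. t < T \<and> pos (c t) r \<noteq> None \<and> pos (c (Suc t)) r \<noteq> None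
    \<and> pos (c t) r \<noteq> pos (c (Suc t)) r}"
  let ?dest = "\<lambda>t. the (pos (c (Suc t)) r)"
  have dest: "\<not> halted (c (Suc t))" "pos (c (Suc t)) r \<noteq> pos (c t) r"
    "pos (c (Suc t)) r = Some (?dest t)" if "t \<in> S" for t
    using that halted_Suc(1)[of t] unfolding S_def by auto
  have "inj_on ?dest S"
  proof (rule linorder_inj_onI')
    fix t1 t2
    assume "t1 \<in> S" "t2 \<in> S" "t1 < t2"
    then show "?dest t1 \<noteq> ?dest t2"
      using no_revisit[OF dest[OF \<open>t2 \<in> S\<close>], of "Suc t1"] dest(3)[OF \<open>t1 \<in> S\<close>] by auto
  qed
  moreover have "?dest ` S \<subseteq> R"
    using dest(3) pos_in_R[OF assms(2)] by blast
  ultimately have "card S \<le> card R"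
    using card_inj_on_le[OF _ _ assms(1)] by blast
  then show ?thesis
    unfolding moves_def S_def .
qed

end

theorem mainTheorem4:
  assumes "environment R s"
    and "dflf_run R s c"
    and "filled R (c T)"
    and "\<forall>t<T. \<not> filled R (c t)"
  shows "(\<forall>r. moves c r T \<le> card R) \<and> (\<Sum>r<cnt (c T). moves c r T) \<le> card R ^ 2"
proof -
  (* Both bounds hold at every time T. *)
  interpret dflf_execution R s c
    using assms(2) by unfold_locales
  have R: "finite R" "s \<in> R"
    using assms(1) unfolding environment_def by auto
  then have moves: "moves c r T \<le> card R" for r
    by (rule moves_le_card)
  have "(\<Sum>r<cnt (c T). moves c r T) \<le> cnt (c T) * card R"
    using sum_bounded_above[of "{..<cnt (c T)}" "\<lambda>r. moves c r T" "card R"] moves by simp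
  also have "\<dots> \<le> card R * card R"
    using cnt_le_card[OF R] by simp
  finally show ?thesis
    using moves by (simp add: power2_eq_square)
qed

end
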